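(* Let $n\ge3$, $c>0$, and let $\omega$ be as in the context. Then: (i) for all $x\ge x_0$, $(\gamma(x)+nc)\,x\,\frac{\omega'(x)}{\omega(x)}=2\gamma(x)-x\gamma'(x)-3nc$; (ii) $2x_0\omega''(x_0)+\omega'(x_0)>0$ and $\lim_{x\to\infty}\left(2x\omega''(x)+\omega'(x)\right)>0$; (iii) $\omega(x)-x\omega'(x)$ is bounded on $[0,\infty)$.
   Context: Definition of $\gamma$: For $n\ge 3$, $c>0$ and $x\ge 0$ put $\alpha(x)=nc+\frac{n}{2(n-1)}x-\frac{n-2}{2(n-1)}\sqrt{x^2+4(n-1)cx}$, $y_n=4(1-n)+\frac{2(n^2-4)}{\sqrt{2n-5}}\cos\!\left(\frac13\arctan\frac{n^2-4n+6}{2(n-1)\sqrt{2n-5}}\right)$, $x_0=y_nc$, $\beta(x)=\alpha(x_0)+\alpha'(x_0)(x-x_0)+\frac12\alpha''(x_0)(x-x_0)^2$, and $\gamma(x)=\alpha(x)$ for $x\ge x_0$, $\gamma(x)=\beta(x)$ for $0\le x<x_0$. Definition of $\omega$: $\omega$ is a positive $C^2$ function on $[0,\infty)$ such that for $x\ge x_0$ \[\omega(x)=\frac{x^2}{\sqrt{x^2+4(n-1)cx}}\left[\left(1+\frac{n^2c}{x}\right)\frac{\frac{n}{n-2}-\left(1+4(n-1)c/x\right)^{-1/2}}{\frac{n}{n-2}+\left(1+4(n-1)c/x\right)^{-1/2}}\right]^2.\] (On $[0,x_0)$, $\omega$ is an arbitrary positive $C^2$ extension; derivatives at $x_0$ are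 those of this $C^2$ function.) *)

theory Defs
  imports "HOL-Analysis.Analysis"
begin

definition alpha :: "nat \<Rightarrow> real \<Rightarrow> real \<Rightarrow> real" where
  "alpha n c x = real n * c + real n / (2 * (real n - 1)) * x
     - (real n - 2) / (2 * (real n - 1)) * sqrt (x^2 + 4 * (real n - 1) * c * x)"

definition y_n :: "nat \<Rightarrow> real" where
  "y_n n = 4 * (1 - real n) + 2 * ((real n)^2 - 4) / sqrt (2 * real n - 5)
     * cos (1/3 * arctan (((real n)^2 - 4 * real n + 6) / (2 * (real n - 1) * sqrt (2 * real n - 5))))"

definition x_0 :: "nat \<Rightarrow> real \<Rightarrow> real" where
  "x_0 n c = y_n n * c"

definition beta :: "nat \<Rightarrow> real \<Rightarrow> real \<Rightarrow> real" where
  "beta n c x = alpha n c (x_0 n c) + deriv (alpha n c) (x_0 n c) * (x - x_0 n c)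
     + 1/2 * deriv (deriv (alpha n c)) (x_0 n c) * (x - x_0 n c)^2"

definition gamma :: "nat \<Rightarrow> real \<Rightarrow> real \<Rightarrow> real" where
  "gamma n c x = (if x \<ge> x_0 n c then alpha n c x else beta n c x)"

definition omega_formula :: "nat \<Rightarrow> real \<Rightarrow> real \<Rightarrow> real" where
  "omega_formula n c x = x^2 / sqrt (x^2 + 4 * (real n - 1) * c * x) *
     ((1 + (real n)^2 * c / x) *
      (real n / (real n - 2) - 1 / sqrt (1 + 4 * (real n - 1) * c / x)) /
      (real n / (real n - 2) + 1 / sqrt (1 + 4 * (real n - 1) * c / x)))^2"

end

theory Submission
  imports Defs
begin

text \<open>Everything becomes explicit in the variable \<open>s = sqrt (1 + 4(n - 1)c / x)\<close>, which decreases
  from \<open>s(x\<^sub>0)\<close> to \<open>1\<close> as \<open>x\<close> runs through \<open>[x\<^sub>0, \<infinity>)\<close> and satisfies \<open>x = 4(n - 1)c / (s\<^sup>2 - 1)\<close>.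
  In terms of \<open>s\<close>, the functions \<open>\<alpha>, \<alpha>', \<omega>, \<omega>'\<close> are rational, so (i) is a rational identity.
  Differentiating once more, \<open>2x\<omega>'' + \<omega>' = P(s) / (32 (n - 1)\<^sup>2 s\<^sup>5)\<close> for a polynomial \<open>P\<close> whose
  expansion in powers of \<open>s - 1\<close> and \<open>n - 3\<close> has nonnegative coefficients and constant term 32:
  this gives (ii), at \<open>x\<^sub>0\<close> (only \<open>x\<^sub>0 > 0\<close> matters) and in the limit \<open>s \<rightarrow> 1\<close>, which is
  \<open>1 / (n - 1)\<^sup>2\<close>. Finally \<open>\<omega> - x\<omega>'\<close> is a continuous function of \<open>s \<in> [1, s(x\<^sub>0)]\<close> on
  \<open>[x\<^sub>0, \<infinity>)\<close> and is continuous on the compact \<open>[0, x\<^sub>0]\<close>, whence (iii).\<close>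

lemma has_real_derivative_at_split:
  fixes f :: "real \<Rightarrow> real"
  assumes "(f has_real_derivative D) (at x within {..x})" "(f has_real_derivative D) (at x within {x..})"
  shows "(f has_real_derivative D) (at x)"
proof -
  have "{..x} \<union> {x..} = UNIV" by auto
  with assms show ?thesis unfolding has_field_derivative_iff by (rule Lim_Un_univ)
qed

lemma has_real_derivative_unique_right:
  fixes f g :: "real \<Rightarrow> real"
  assumes f: "(f has_real_derivative d) (at x within S)" and S: "{x..} \<subseteq> S"
    and g: "(g has_real_derivative D) (at x)" and eq: "\<And>y. y \<ge> x \<Longrightarrow> f y = g y"
  shows "d = D"
proof -
  have "(f has_real_derivative d) (at x within {x..})"
    using has_field_derivative_subset[OF f S] .
  moreover have "(f has_real_derivative D) (at x within {x..})"
    using has_field_derivative_at_within[OF g]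
    by (rule has_field_derivative_transform_within[where d = 1]) (use eq in auto)
  moreover have "at x within {x..} \<noteq> bot" by (simp add: at_within_Ici_at_right)
  ultimately show ?thesis
    by (metis has_real_derivative_iff_has_vector_derivative vector_derivative_unique_within)
qed

lemma bounded_image_atLeast_if_factors:
  fixes f g :: "real \<Rightarrow> real"
  assumes "continuous_on {0..a} f" "compact K" "continuous_on K g"
    and factors: "\<And>x. x \<ge> a \<Longrightarrow> h x \<in> K \<and> f x = g (h x)"
  shows "bounded (f ` {0..})"
proof -
  have "f ` {0..} \<subseteq> f ` {0..a} \<union> g ` K" using factors by force
  moreover have "bounded (f ` {0..a})" "bounded (g ` K)"
    using assms by (auto intro!: compact_imp_bounded compact_continuous_image)
  ultimately show ?thesis by (meson bounded_Un bounded_subset)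
qed

definition s_of :: "real \<Rightarrow> real \<Rightarrow> real \<Rightarrow> real" where
  "s_of N c x = sqrt (1 + 4 * (N - 1) * c / x)"

definition x_of :: "real \<Rightarrow> real \<Rightarrow> real \<Rightarrow> real" where
  "x_of N c s = 4 * (N - 1) * c / (s^2 - 1)"

context
  fixes N c :: real
  assumes N: "N > 1" and c: "c > 0"
begin

lemma s_of_gt_one:
  assumes "x > 0" shows "s_of N c x > 1"
  using assms N c by (simp add: s_of_def)

lemma s_of_squared:
  assumes "x > 0" shows "(s_of N c x)^2 = 1 + 4 * (N - 1) * c / x"
  using assms N c by (simp add: s_of_def)

lemma x_of_s_of:
  assumes "x > 0" shows "x_of N c (s_of N c x) = x"
  using assms N c by (simp add: x_of_def s_of_squared)

lemma sqrt_eq_mult_s_of: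
  assumes x: "x > 0" shows "sqrt (x^2 + 4 * (N - 1) * c * x) = x * s_of N c x"
proof -
  have "x^2 + 4 * (N - 1) * c * x = x^2 * (1 + 4 * (N - 1) * c / x)"
    using x by (simp add: field_simps power2_eq_square)
  then show ?thesis using x by (simp add: s_of_def real_sqrt_mult)
qed

lemma s_of_antimono:
  assumes "0 < x" "x \<le> y" shows "s_of N c y \<le> s_of N c x"
proof -
  have "4 * (N - 1) * c / y \<le> 4 * (N - 1) * c / x"
    using assms N c by (intro divide_left_mono) auto
  then show ?thesis by (simp add: s_of_def)
qed

lemma has_real_derivative_s_of:
  assumes x: "x > 0"
  shows "(s_of N c has_real_derivative
           (- (((s_of N c x)^2 - 1)^2 / (8 * (N - 1) * c * s_of N c x)))) (at x)"
proof -
  have "1 + 4 * (N - 1) * c / x > 0" using x N c by (simp add: add_pos_pos)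
  then have "(s_of N c has_real_derivative
           inverse (s_of N c x) / 2 * (- (4 * (N - 1) * c) / x^2)) (at x)"
    unfolding s_of_def[abs_def] using x
    by (auto intro!: derivative_eq_intros simp: power2_eq_square)
  moreover have "inverse (s_of N c x) / 2 * (- (4 * (N - 1) * c) / x^2)
      = - (((s_of N c x)^2 - 1)^2 / (8 * (N - 1) * c * s_of N c x))"
    using x N c s_of_gt_one[OF x] unfolding s_of_squared[OF x]
    by (simp add: field_simps power2_eq_square)
  ultimately show ?thesis by simp
qed

end

lemma tendsto_s_of_at_top: "(s_of N c \<longlongrightarrow> 1) at_top"
  unfolding s_of_def[abs_def] by real_asymp

text \<open>The quantities of the theorem as functions of \<open>s\<close>: at \<open>x = x_of N c s\<close>, \<open>omega_s\<close> is
  \<open>\<omega>\<close>, \<open>omega'_s\<close> is \<open>\<omega>'\<close>, \<open>combination_s\<close> is \<open>2x\<omega>'' + \<omega>'\<close>, \<open>tangent_intercept_s\<close> is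
  \<open>\<omega> - x\<omega>'\<close>, and \<open>alpha_s\<close>, \<open>alpha'_s\<close> are \<open>\<alpha>\<close>, \<open>\<alpha>'\<close>.\<close>

definition omega_s :: "real \<Rightarrow> real \<Rightarrow> real \<Rightarrow> real" where
  "omega_s N c s = c * (N * s - (N - 2))^4 / (4 * (N - 1) * s * (s^2 - 1))"

definition omega_cubic :: "real \<Rightarrow> real \<Rightarrow> real" where
  "omega_cubic N s = N * s^3 + 3 * (N - 2) * s^2 - 3 * N * s - (N - 2)"

definition omega'_num :: "real \<Rightarrow> real \<Rightarrow> real" where
  "omega'_num N s = (N * s - (N - 2))^3 * omega_cubic N s"

definition omega'_num_deriv :: "real \<Rightarrow> real \<Rightarrow> real" where
  "omega'_num_deriv N s = 3 * N * (N * s - (N - 2))^2 * omega_cubic N s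
     + (N * s - (N - 2))^3 * (3 * N * s^2 + 6 * (N - 2) * s - 3 * N)"

definition omega'_s :: "real \<Rightarrow> real \<Rightarrow> real" where
  "omega'_s N s = - omega'_num N s / (32 * (N - 1)^2 * s^3)"

definition combination_num :: "real \<Rightarrow> real \<Rightarrow> real" where
  "combination_num N s = s * (s^2 - 1) * omega'_num_deriv N s - (4 * s^2 - 3) * omega'_num N s"

definition combination_s :: "real \<Rightarrow> real \<Rightarrow> real" where
  "combination_s N s = combination_num N s / (32 * (N - 1)^2 * s^5)"

definition tangent_intercept_s :: "real \<Rightarrow> real \<Rightarrow> real \<Rightarrow> real" where
  "tangent_intercept_s N c s = c * (N * s - (N - 2))^3 * (3 * N * s + N - 2) / (8 * (N - 1) * s^3)"

definition alpha_s :: "real \<Rightarrow> real \<Rightarrow> real \<Rightarrow> real" where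
  "alpha_s N c s = N * c + 2 * c * (N - (N - 2) * s) / (s^2 - 1)"

definition alpha'_s :: "real \<Rightarrow> real \<Rightarrow> real" where
  "alpha'_s N s = N / (2 * (N - 1)) - (N - 2) * (s^2 + 1) / (4 * (N - 1) * s)"

lemma has_real_derivative_omega'_num:
  "(omega'_num N has_real_derivative omega'_num_deriv N s) (at s)"
  unfolding omega'_num_def[abs_def] omega'_num_deriv_def omega_cubic_def
  by (rule derivative_eq_intros refl)+ simp

context
  fixes N s :: real
  assumes N: "N > 1" and s: "s > 1"
begin

lemma s_denominators_nonzero: "s \<noteq> 0" "s^2 - 1 \<noteq> 0" "N - 1 \<noteq> 0"
proof -
  have "1 < s^2" using s by simp
  then show "s \<noteq> 0" "s^2 - 1 \<noteq> 0" "N - 1 \<noteq> 0" using N s by linarith+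
qed

lemma has_real_derivative_omega_s:
  "(omega_s N c has_real_derivative - 8 * (N - 1) * c * s / (s^2 - 1)^2 * omega'_s N s) (at s)"
  unfolding omega_s_def[abs_def] omega'_s_def omega'_num_def omega_cubic_def
  apply (rule derivative_eq_intros refl)+
  using s_denominators_nonzero apply simp
  using s_denominators_nonzero apply (simp add: divide_simps)
  by algebra

lemma has_real_derivative_omega'_s:
  "(omega'_s N has_real_derivative s / (s^2 - 1) * (omega'_s N s - combination_s N s)) (at s)"
  unfolding omega'_s_def[abs_def]
  apply (rule derivative_eq_intros has_real_derivative_omega'_num refl)+
  using s_denominators_nonzero apply simp
  using s_denominators_nonzero apply (simp add: combination_s_def combination_num_def divide_simps)
  by algebra

lemma omega_s_minus_x_omega'_s:
  "omega_s N c s - x_of N c s * omega'_s N s = tangent_intercept_s N c s"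
  using s_denominators_nonzero
  unfolding omega_s_def x_of_def omega'_s_def omega'_num_def omega_cubic_def tangent_intercept_s_def
  by (simp add: divide_simps) algebra

lemma alpha_x_of:
  "N * c + N / (2 * (N - 1)) * x_of N c s - (N - 2) / (2 * (N - 1)) * (x_of N c s * s) = alpha_s N c s"
  using s_denominators_nonzero unfolding x_of_def alpha_s_def by (simp add: divide_simps) algebra

lemma alpha'_x_of:
  assumes c: "c > 0"
  shows "N / (2 * (N - 1)) - (N - 2) / (2 * (N - 1))
           * ((2 * x_of N c s + 4 * (N - 1) * c) / (2 * (x_of N c s * s))) = alpha'_s N s"
  using s_denominators_nonzero c unfolding x_of_def alpha'_s_def by (simp add: divide_simps) algebra

lemma omega_formula_x_of:
  assumes N2: "N > 2" and c: "c > 0"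
  shows "(x_of N c s)^2 / (x_of N c s * s)
           * ((1 + N^2 * c / x_of N c s) * (N / (N - 2) - 1 / s) / (N / (N - 2) + 1 / s))^2
         = omega_s N c s"
proof -
  have "N * s + (N - 2) > 0" using N2 s by (simp add: add_pos_pos)
  then show ?thesis
    using s_denominators_nonzero c N2 unfolding x_of_def omega_s_def by (simp add: divide_simps) algebra
qed

lemma log_derivative_identity_s:
  assumes c: "c > 0"
  shows "(alpha_s N c s + N * c) * x_of N c s * (omega'_s N s / omega_s N c s)
           = 2 * alpha_s N c s - x_of N c s * alpha'_s N s - 3 * N * c"
proof -
  have "N * 1 < N * s" using N s by (intro mult_strict_left_mono) auto
  then have "N * s - (N - 2) > 0" by linarith
  then show ?thesis
    using s_denominators_nonzero c
    unfolding alpha_s_def x_of_def omega'_s_def omega'_num_def omega_cubic_def omega_s_def alpha'_s_def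
    by (simp add: divide_simps) algebra
qed

end

lemma combination_num_expansion:
  "combination_num (j + 3) (p + 1) =
     32 + p * (160
     + p * ((896 + j * (576 + j * 144))
     + p * ((3456 + j * (3616 + j * (1344 + j * 160)))
     + p * ((6906 + j * (8480 + j * (3804 + j * (704 + j * 42))))
     + p * ((7374 + j * (9640 + j * (4692 + j * (1000 + j * 78))))
     + p * ((4293 + j * (5724 + j * (2862 + j * (636 + j * 53))))
     + p * ((1296 + j * (1728 + j * (864 + j * (192 + j * 16))))
     + p * ((162 + j * (216 + j * (108 + j * (24 + j * 2))))))))))))"
  unfolding combination_num_def omega'_num_def omega'_num_deriv_def omega_cubic_def by algebra

lemma combination_num_pos:
  assumes "N \<ge> 3" "s \<ge> 1"
  shows "combination_num N s > 0"
proof -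
  have "combination_num ((N - 3) + 3) ((s - 1) + 1) > 0"
    unfolding combination_num_expansion using assms
    by (intro add_pos_nonneg mult_nonneg_nonneg add_nonneg_nonneg) auto
  then show ?thesis by simp
qed

lemma continuous_on_tangent_intercept_s:
  assumes "N > 1" shows "continuous_on {1..} (tangent_intercept_s N c)"
  unfolding tangent_intercept_s_def[abs_def] using assms by (intro continuous_intros) auto

lemma combination_s_pos:
  assumes "N \<ge> 3" "s \<ge> 1" shows "combination_s N s > 0"
  using combination_num_pos[OF assms] assms by (simp add: combination_s_def)

lemma combination_s_at_1: "combination_s N 1 = 1 / (N - 1)^2"
  using combination_num_expansion[of "N - 3" 0] by (simp add: combination_s_def)

context
  fixes N c :: real
  assumes N: "N > 1" and c: "c > 0"
begin

lemma has_real_derivative_omega_s_of: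
  assumes x: "x > 0"
  shows "((\<lambda>x. omega_s N c (s_of N c x)) has_real_derivative omega'_s N (s_of N c x)) (at x)"
proof -
  define s where "s = s_of N c x"
  have s: "s > 1" unfolding s_def using s_of_gt_one[OF N c x] .
  have "((\<lambda>x. omega_s N c (s_of N c x)) has_real_derivative
          - 8 * (N - 1) * c * s / (s^2 - 1)^2 * omega'_s N s
          * (- ((s^2 - 1)^2 / (8 * (N - 1) * c * s)))) (at x)"
    unfolding s_def
    using DERIV_chain2[OF has_real_derivative_omega_s[OF N s[unfolded s_def]] has_real_derivative_s_of[OF N c x]] .
  moreover have "- 8 * (N - 1) * c * s / (s^2 - 1)^2 * omega'_s N s
          * (- ((s^2 - 1)^2 / (8 * (N - 1) * c * s))) = omega'_s N s"
    using s_denominators_nonzero[OF N s] c by (simp add: divide_simps) algebra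
  ultimately show ?thesis unfolding s_def by simp
qed

lemma has_real_derivative_omega'_s_of:
  assumes x: "x > 0"
  shows "((\<lambda>x. omega'_s N (s_of N c x)) has_real_derivative
           (combination_s N (s_of N c x) - omega'_s N (s_of N c x)) / (2 * x)) (at x)"
proof -
  define s where "s = s_of N c x"
  have s: "s > 1" unfolding s_def using s_of_gt_one[OF N c x] .
  have x_eq: "x = x_of N c s" unfolding s_def using x_of_s_of[OF N c x] by simp
  have "((\<lambda>x. omega'_s N (s_of N c x)) has_real_derivative
          s / (s^2 - 1) * (omega'_s N s - combination_s N s)
          * (- ((s^2 - 1)^2 / (8 * (N - 1) * c * s)))) (at x)"
    unfolding s_def
    using DERIV_chain2[OF has_real_derivative_omega'_s[OF N s[unfolded s_def]] has_real_derivative_s_of[OF N c x]] .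
  moreover have "s / (s^2 - 1) * (omega'_s N s - combination_s N s) * (- ((s^2 - 1)^2 / (8 * (N - 1) * c * s)))
      = (combination_s N s - omega'_s N s) / (2 * x)"
    unfolding x_eq x_of_def using s_denominators_nonzero[OF N s] c
    by (simp add: divide_simps) algebra
  ultimately show ?thesis unfolding s_def by simp
qed

end

lemma sqrt3_half_less_cos_arctan_third:
  assumes "z \<ge> 0" shows "sqrt 3 / 2 < cos (arctan z / 3)"
proof -
  have "0 \<le> arctan z" "arctan z < pi / 2" using assms arctan_ubound by auto
  then have "cos (pi / 6) < cos (arctan z / 3)" by (intro cos_monotone_0_pi) auto
  then show ?thesis by (simp add: cos_30)
qed

lemma four_mult_sqrt_le:
  fixes N :: real assumes N: "N \<ge> 3"
  shows "4 * (N - 1) * sqrt (2 * N - 5) \<le> sqrt 3 * (N^2 - 4)"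
proof (rule power2_le_imp_le)
  have "3 * N^2 - 8 * N + 8 = 3 * (N - 4/3)^2 + 8/3" by algebra
  then have "0 \<le> (N - 4)^2 * (3 * N^2 - 8 * N + 8)" by (simp add: add_nonneg_pos)
  moreover have "(sqrt 3 * (N^2 - 4))^2 - (4 * (N - 1) * sqrt (2 * N - 5))^2
      = (N - 4)^2 * (3 * N^2 - 8 * N + 8)"
    using N by (simp add: power_mult_distrib) algebra
  ultimately show "(4 * (N - 1) * sqrt (2 * N - 5))^2 \<le> (sqrt 3 * (N^2 - 4))^2" by linarith
  have "3^2 \<le> N^2" using N by (intro power_mono) auto
  then show "0 \<le> sqrt 3 * (N^2 - 4)" by simp
qed

lemma y_n_pos:
  assumes n: "n \<ge> 3" shows "y_n n > 0"
proof -
  define N where "N = real n"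
  have N: "N \<ge> 3" unfolding N_def using n by simp
  define r where "r = sqrt (2 * N - 5)"
  have r: "r > 0" unfolding r_def using N by simp
  have "N^2 - 4 * N + 6 = (N - 2)^2 + 2" by algebra
  then have "N^2 - 4 * N + 6 \<ge> 0" using zero_le_power2[of "N - 2"] by linarith
  then have "(N^2 - 4 * N + 6) / (2 * (N - 1) * r) \<ge> 0" using N r by simp
  then have cos_gt: "sqrt 3 / 2 < cos (arctan ((N^2 - 4 * N + 6) / (2 * (N - 1) * r)) / 3)"
    by (rule sqrt3_half_less_cos_arctan_third)
  have "3^2 \<le> N^2" using N by (intro power_mono) auto
  then have "2 * (N^2 - 4) / r > 0" using r by simp
  then have "2 * (N^2 - 4) / r * (sqrt 3 / 2)
      < 2 * (N^2 - 4) / r * cos (arctan ((N^2 - 4 * N + 6) / (2 * (N - 1) * r)) / 3)"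
    by (rule mult_strict_left_mono[OF cos_gt])
  moreover have "4 * (N - 1) \<le> 2 * (N^2 - 4) / r * (sqrt 3 / 2)"
    using four_mult_sqrt_le[OF N] r unfolding r_def[symmetric] by (simp add: field_simps)
  ultimately show ?thesis unfolding y_n_def N_def[symmetric] r_def[symmetric] by simp
qed

context
  fixes n :: nat and c :: real
  assumes n: "n \<ge> 3" and c: "c > 0"
begin

lemma real_n_gt: "real n > 2" "real n > 1"
  using n by auto

lemma alpha_eq_alpha_s:
  assumes x: "x > 0"
  shows "alpha n c x = alpha_s n c (s_of n c x)"
proof -
  define s where "s = s_of n c x"
  have s: "s > 1" unfolding s_def using s_of_gt_one[OF real_n_gt(2) c x] .
  have x_eq: "x = x_of n c s" unfolding s_def using x_of_s_of[OF real_n_gt(2) c x] by simp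
  show ?thesis
    unfolding alpha_def sqrt_eq_mult_s_of[OF real_n_gt(2) c x] s_def[symmetric]
    unfolding x_eq using alpha_x_of[OF real_n_gt(2) s] .
qed

lemma has_real_derivative_alpha:
  assumes x: "x > 0"
  shows "(alpha n c has_real_derivative alpha'_s n (s_of n c x)) (at x)"
proof -
  define s where "s = s_of n c x"
  have s: "s > 1" unfolding s_def using s_of_gt_one[OF real_n_gt(2) c x] .
  have x_eq: "x = x_of n c s" unfolding s_def using x_of_s_of[OF real_n_gt(2) c x] by simp
  have "x^2 + 4 * (real n - 1) * c * x > 0" using x c real_n_gt by (simp add: add_pos_pos)
  then have "(alpha n c has_real_derivative real n / (2 * (real n - 1)) - (real n - 2) / (2 * (real n - 1))
      * ((2 * x + 4 * (real n - 1) * c) / (2 * sqrt (x^2 + 4 * (real n - 1) * c * x)))) (at x)"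
    unfolding alpha_def[abs_def]
    by (auto intro!: derivative_eq_intros simp: divide_simps)
  then show ?thesis
    unfolding sqrt_eq_mult_s_of[OF real_n_gt(2) c x] s_def[symmetric]
    unfolding x_eq alpha'_x_of[OF real_n_gt(2) s c] .
qed

lemma omega_formula_eq_omega_s:
  assumes x: "x > 0"
  shows "omega_formula n c x = omega_s n c (s_of n c x)"
proof -
  define s where "s = s_of n c x"
  have s: "s > 1" unfolding s_def using s_of_gt_one[OF real_n_gt(2) c x] .
  have x_eq: "x = x_of n c s" unfolding s_def using x_of_s_of[OF real_n_gt(2) c x] by simp
  show ?thesis
    unfolding omega_formula_def sqrt_eq_mult_s_of[OF real_n_gt(2) c x] s_of_def[symmetric] s_def[symmetric]
    unfolding x_eq using omega_formula_x_of[OF real_n_gt(2) s real_n_gt(1) c] by simp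
qed

lemma x_0_pos: "x_0 n c > 0"
  unfolding x_0_def using y_n_pos[OF n] c by simp

lemma has_real_derivative_gamma:
  assumes x: "x \<ge> x_0 n c"
  shows "(gamma n c has_real_derivative deriv (alpha n c) x) (at x)"
proof -
  let ?x0 = "x_0 n c"
  have alpha: "(alpha n c has_real_derivative deriv (alpha n c) y) (at y)" if "y \<ge> ?x0" for y
  proof -
    have "(alpha n c has_real_derivative alpha'_s n (s_of n c y)) (at y)"
      using has_real_derivative_alpha x_0_pos that by simp
    moreover from this have "deriv (alpha n c) y = alpha'_s n (s_of n c y)" by (rule DERIV_imp_deriv)
    ultimately show ?thesis by simp
  qed
  have right: "(gamma n c has_real_derivative deriv (alpha n c) x) (at x within {x..})"
    using has_field_derivative_at_within[OF alpha[OF x]]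
    by (rule has_field_derivative_transform_within[where d = 1]) (use x in \<open>auto simp: gamma_def\<close>)
  show ?thesis
  proof (cases "x = ?x0")
    case True
    have "(beta n c has_real_derivative deriv (alpha n c) ?x0) (at ?x0)"
      unfolding beta_def[abs_def] by (rule derivative_eq_intros refl)+ simp
    from has_field_derivative_at_within[OF this]
    have "(gamma n c has_real_derivative deriv (alpha n c) ?x0) (at ?x0 within {..?x0})"
      by (rule has_field_derivative_transform_within[where d = 1]) (auto simp: gamma_def beta_def)
    then show ?thesis using right True by (auto intro: has_real_derivative_at_split)
  next
    case False
    then have "x > ?x0" using x by simp
    then show ?thesis using right
      by (intro has_field_derivative_transform_within_open[OF alpha[OF x], where S = "{?x0<..}"])
         (auto simp: gamma_def)
  qed
qed

lemma has_real_derivative_omega_formula: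
  assumes x: "x > 0"
  shows "(omega_formula n c has_real_derivative omega'_s n (s_of n c x)) (at x)"
proof (rule has_field_derivative_transform_within_open)
  show "((\<lambda>x. omega_s n c (s_of n c x)) has_real_derivative omega'_s n (s_of n c x)) (at x)"
    by (rule has_real_derivative_omega_s_of[OF real_n_gt(2) c x])
  show "\<And>y. y \<in> {0<..} \<Longrightarrow> omega_s n c (s_of n c y) = omega_formula n c y"
    using omega_formula_eq_omega_s by simp
qed (use x in auto)

lemma omega_formula_minus_x_omega':
  assumes x: "x > 0"
  shows "omega_formula n c x - x * omega'_s n (s_of n c x) = tangent_intercept_s n c (s_of n c x)"
proof -
  define s where "s = s_of n c x"
  have s: "s > 1" unfolding s_def using s_of_gt_one[OF real_n_gt(2) c x] .
  have x_eq: "x = x_of n c s" unfolding s_def using x_of_s_of[OF real_n_gt(2) c x] by simp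
  show ?thesis
    unfolding omega_formula_eq_omega_s[OF x] s_def[symmetric]
    using omega_s_minus_x_omega'_s[OF real_n_gt(2) s, of c] unfolding x_eq[symmetric] .
qed

lemma gamma_log_derivative_identity:
  assumes x: "x \<ge> x_0 n c"
  shows "(gamma n c x + real n * c) * x * (omega'_s n (s_of n c x) / omega_formula n c x)
           = 2 * gamma n c x - x * deriv (gamma n c) x - 3 * real n * c"
proof -
  have x_pos: "x > 0" using x x_0_pos by linarith
  define s where "s = s_of n c x"
  have s: "s > 1" unfolding s_def using s_of_gt_one[OF real_n_gt(2) c x_pos] .
  have x_eq: "x = x_of n c s" unfolding s_def using x_of_s_of[OF real_n_gt(2) c x_pos] by simp
  have gamma_eq: "gamma n c x = alpha_s n c s"
    using x alpha_eq_alpha_s[OF x_pos] unfolding gamma_def s_def by simp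
  have "deriv (gamma n c) x = deriv (alpha n c) x"
    by (rule DERIV_imp_deriv[OF has_real_derivative_gamma[OF x]])
  also have "\<dots> = alpha'_s n s"
    unfolding s_def by (rule DERIV_imp_deriv[OF has_real_derivative_alpha[OF x_pos]])
  finally have deriv_eq: "deriv (gamma n c) x = alpha'_s n s" .
  show ?thesis
    unfolding s_def[symmetric] gamma_eq deriv_eq omega_formula_eq_omega_s[OF x_pos]
    using log_derivative_identity_s[OF real_n_gt(2) s c] unfolding x_eq[symmetric] .
qed

end

context
  fixes N c :: real
  assumes N: "N > 1" and c: "c > 0"
begin

lemma tendsto_combination_s_of: "((\<lambda>x. combination_s N (s_of N c x)) \<longlongrightarrow> 1 / (N - 1)^2) at_top"
proof -
  have "isCont (combination_s N) 1"
    unfolding combination_s_def[abs_def] combination_num_def[abs_def] omega'_num_def[abs_def]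
      omega'_num_deriv_def[abs_def] omega_cubic_def[abs_def]
    by (intro continuous_intros) (use N in simp)
  from isCont_tendsto_compose[OF this tendsto_s_of_at_top]
  show ?thesis unfolding combination_s_at_1 .
qed

end

locale omega_extension =
  fixes n :: nat and c :: real and \<omega> \<omega>' \<omega>'' :: "real \<Rightarrow> real"
  assumes n: "n \<ge> 3" and c: "c > 0"
    and d1: "\<And>x. x \<ge> 0 \<Longrightarrow> (\<omega> has_real_derivative \<omega>' x) (at x within {0..})"
    and d2: "\<And>x. x \<ge> 0 \<Longrightarrow> (\<omega>' has_real_derivative \<omega>'' x) (at x within {0..})"
    and formula: "\<And>x. x \<ge> x_0 n c \<Longrightarrow> \<omega> x = omega_formula n c x"
begin

lemma omega'_eq:
  assumes x: "x \<ge> x_0 n c" shows "\<omega>' x = omega'_s n (s_of n c x)"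
proof (rule has_real_derivative_unique_right)
  have x_pos: "x > 0" using x x_0_pos[OF n c] by linarith
  show "(\<omega> has_real_derivative \<omega>' x) (at x within {0..})" using d1 x_pos by simp
  show "(omega_formula n c has_real_derivative omega'_s n (s_of n c x)) (at x)"
    by (rule has_real_derivative_omega_formula[OF n c x_pos])
qed (use formula x x_0_pos[OF n c] in auto)

lemma combination_eq:
  assumes x: "x \<ge> x_0 n c" shows "2 * x * \<omega>'' x + \<omega>' x = combination_s n (s_of n c x)"
proof -
  have x_pos: "x > 0" using x x_0_pos[OF n c] by linarith
  have "\<omega>'' x = (combination_s n (s_of n c x) - omega'_s n (s_of n c x)) / (2 * x)"
  proof (rule has_real_derivative_unique_right)
    show "(\<omega>' has_real_derivative \<omega>'' x) (at x within {0..})" using d2 x_pos by simp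
    show "((\<lambda>x. omega'_s n (s_of n c x)) has_real_derivative
            (combination_s n (s_of n c x) - omega'_s n (s_of n c x)) / (2 * x)) (at x)"
      using has_real_derivative_omega'_s_of[OF _ c x_pos] n by simp
  qed (use omega'_eq x x_pos in auto)
  then show ?thesis using omega'_eq[OF x] x_pos by simp
qed

lemma omega_log_derivative_identity:
  assumes x: "x \<ge> x_0 n c"
  shows "(gamma n c x + real n * c) * x * (\<omega>' x / \<omega> x)
           = 2 * gamma n c x - x * deriv (gamma n c) x - 3 * real n * c"
  using gamma_log_derivative_identity[OF n c x] unfolding omega'_eq[OF x] formula[OF x] .

lemma combination_pos_at_x_0: "2 * x_0 n c * \<omega>'' (x_0 n c) + \<omega>' (x_0 n c) > 0"
proof -
  have "s_of n c (x_0 n c) > 1" using s_of_gt_one[OF _ c x_0_pos[OF n c]] n by simp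
  then show ?thesis unfolding combination_eq[OF order_refl] using combination_s_pos n by simp
qed

lemma combination_tendsto: "((\<lambda>x. 2 * x * \<omega>'' x + \<omega>' x) \<longlongrightarrow> 1 / (real n - 1)^2) at_top"
proof -
  have "\<forall>\<^sub>F x in at_top. combination_s n (s_of n c x) = 2 * x * \<omega>'' x + \<omega>' x"
    using eventually_ge_at_top[of "x_0 n c"] by eventually_elim (simp add: combination_eq)
  moreover have "real n > 1" using n by simp
  then have "((\<lambda>x. combination_s n (s_of n c x)) \<longlongrightarrow> 1 / (real n - 1)^2) at_top"
    using tendsto_combination_s_of[OF _ c] by simp
  ultimately show ?thesis by (rule Lim_transform_eventually[rotated])
qed

lemma bounded_omega_minus_x_omega': "bounded ((\<lambda>x. \<omega> x - x * \<omega>' x) ` {0..})"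
proof (rule bounded_image_atLeast_if_factors)
  let ?x0 = "x_0 n c" and ?s = "s_of n c"
  have x0: "?x0 > 0" and N: "real n > 1" using x_0_pos[OF n c] n by auto
  have sub: "{0..?x0} \<subseteq> {0..}" by auto
  have "continuous_on {0..} \<omega>" by (rule DERIV_continuous_on[where D = \<omega>']) (simp add: d1)
  moreover have "continuous_on {0..} \<omega>'" by (rule DERIV_continuous_on[where D = \<omega>'']) (simp add: d2)
  ultimately show "continuous_on {0..?x0} (\<lambda>x. \<omega> x - x * \<omega>' x)"
    by (intro continuous_intros continuous_on_subset[OF _ sub])
  show "continuous_on {1..?s ?x0} (tangent_intercept_s n c)"
    using continuous_on_tangent_intercept_s[OF N] by (rule continuous_on_subset) auto
  show "?s x \<in> {1..?s ?x0} \<and> \<omega> x - x * \<omega>' x = tangent_intercept_s n c (?s x)"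
    if x: "x \<ge> ?x0" for x
  proof
    have x_pos: "x > 0" using x0 x by linarith
    show "?s x \<in> {1..?s ?x0}"
      using s_of_gt_one[OF N c x_pos] s_of_antimono[OF N c x0 x] by simp
    show "\<omega> x - x * \<omega>' x = tangent_intercept_s n c (?s x)"
      unfolding formula[OF x] omega'_eq[OF x] by (rule omega_formula_minus_x_omega'[OF n c x_pos])
  qed
qed simp

end

theorem mainTheorem10:
  fixes n :: nat and c :: real
    and \<omega> \<omega>' \<omega>'' :: "real \<Rightarrow> real"
  assumes n3: "n \<ge> 3" and cpos: "c > 0"
    and pos: "\<And>x. x \<ge> 0 \<Longrightarrow> \<omega> x > 0"
    and d1: "\<And>x. x \<ge> 0 \<Longrightarrow> (\<omega> has_real_derivative \<omega>' x) (at x within {0..})"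
    and d2: "\<And>x. x \<ge> 0 \<Longrightarrow> (\<omega>' has_real_derivative \<omega>'' x) (at x within {0..})"
    and cont2: "continuous_on {0..} \<omega>''"
    and formula: "\<And>x. x \<ge> x_0 n c \<Longrightarrow> \<omega> x = omega_formula n c x"
  shows "(\<forall>x \<ge> x_0 n c.
            (gamma n c x + real n * c) * x * (\<omega>' x / \<omega> x)
              = 2 * gamma n c x - x * deriv (gamma n c) x - 3 * real n * c)
       \<and> 2 * x_0 n c * \<omega>'' (x_0 n c) + \<omega>' (x_0 n c) > 0
       \<and> (\<exists>L > 0. ((\<lambda>x. 2 * x * \<omega>'' x + \<omega>' x) \<longlongrightarrow> L) at_top)
       \<and> bounded ((\<lambda>x. \<omega> x - x * \<omega>' x) ` {0..})"
proof -
  interpret omega_extension n c \<omega> \<omega>' \<omega>''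
    by unfold_locales (fact n3 cpos d1 d2 formula)+
  have "1 / (real n - 1)^2 > 0" using n3 by simp
  then have "\<exists>L > 0. ((\<lambda>x. 2 * x * \<omega>'' x + \<omega>' x) \<longlongrightarrow> L) at_top"
    using combination_tendsto by blast
  then show ?thesis
    using omega_log_derivative_identity combination_pos_at_x_0 bounded_omega_minus_x_omega' by simp
qed

end
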